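(* Let $U$ be a nonzero subspace of $\mathbb{F}_q^n$ and let $u$ be the minimum element of $U\setminus\{0\}$ with respect to the total order $\prec$ on $\mathbb{F}_q^n$. Then $u$ is the last row of the reduced row echelon form of a generator matrix of $U$.
   Context: Fix a total order $\prec$ on $\mathbb{F}_q$ such that $0\prec1\prec\alpha$ for all $\alpha\in\mathbb{F}_q\setminus\{0,1\}$, and extend it lexicographically to a total order $\prec$ on $\mathbb{F}_q^n$. The reduced row echelon form of a $k$-dimensional subspace is its unique $k\times n$ generator matrix in reduced row echelon form (the leading nonzero positions of the rows increase from top to bottom). *)

theory Defs
  imports Main
begin

text \<open>Vectors of F_q^n are represented as functions nat => 'a vanishing outside {0..<n};
  coordinate i (0-based) corresponds to position i+1 of the paper.\<close>

definition vecs :: "nat \<Rightarrow> (nat \<Rightarrow> 'a::zero) set" where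
  "vecs n = {x. \<forall>i\<ge>n. x i = 0}"

definition subspace :: "nat \<Rightarrow> (nat \<Rightarrow> 'a::field) set \<Rightarrow> bool" where
  "subspace n U \<longleftrightarrow> U \<subseteq> vecs n \<and> (\<lambda>_. 0) \<in> U
     \<and> (\<forall>x\<in>U. \<forall>y\<in>U. (\<lambda>i. x i + y i) \<in> U)
     \<and> (\<forall>c. \<forall>x\<in>U. (\<lambda>i. c * x i) \<in> U)"

definition field_order :: "('a::field \<Rightarrow> 'a \<Rightarrow> bool) \<Rightarrow> bool" where
  "field_order lt \<longleftrightarrow> (\<forall>x. \<not> lt x x) \<and> (\<forall>x y z. lt x y \<longrightarrow> lt y z \<longrightarrow> lt x z)
     \<and> (\<forall>x y. x \<noteq> y \<longrightarrow> lt x y \<or> lt y x)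
     \<and> lt 0 1 \<and> (\<forall>a. a \<noteq> 0 \<and> a \<noteq> 1 \<longrightarrow> lt 1 a)"

definition lex_less :: "nat \<Rightarrow> ('a \<Rightarrow> 'a \<Rightarrow> bool) \<Rightarrow> (nat \<Rightarrow> 'a) \<Rightarrow> (nat \<Rightarrow> 'a) \<Rightarrow> bool" where
  "lex_less n lt x y \<longleftrightarrow> (\<exists>i<n. (\<forall>j<i. x j = y j) \<and> lt (x i) (y i))"

definition lincomb :: "(nat \<Rightarrow> 'a::comm_ring_1) \<Rightarrow> (nat \<Rightarrow> 'a) list \<Rightarrow> nat \<Rightarrow> 'a" where
  "lincomb c M = (\<lambda>j. \<Sum>i<length M. c i * (M ! i) j)"

definition generator_matrix :: "nat \<Rightarrow> (nat \<Rightarrow> 'a::field) set \<Rightarrow> (nat \<Rightarrow> 'a) list \<Rightarrow> bool" where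
  "generator_matrix n U M \<longleftrightarrow> set M \<subseteq> vecs n
     \<and> U = {lincomb c M | c. True}
     \<and> (\<forall>c. lincomb c M = (\<lambda>_. 0) \<longrightarrow> (\<forall>i<length M. c i = 0))"

definition pivot :: "(nat \<Rightarrow> 'a::zero) \<Rightarrow> nat" where
  "pivot x = (LEAST i. x i \<noteq> 0)"

definition is_rref :: "(nat \<Rightarrow> 'a::field) list \<Rightarrow> bool" where
  "is_rref M \<longleftrightarrow> (\<forall>r\<in>set M. r \<noteq> (\<lambda>_. 0))
     \<and> (\<forall>i j. i < j \<and> j < length M \<longrightarrow> pivot (M ! i) < pivot (M ! j))
     \<and> (\<forall>i<length M. (M ! i) (pivot (M ! i)) = 1)
     \<and> (\<forall>i<length M. \<forall>j<length M. i \<noteq> j \<longrightarrow> (M ! j) (pivot (M ! i)) = 0)"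

definition rref_of :: "nat \<Rightarrow> (nat \<Rightarrow> 'a::field) set \<Rightarrow> (nat \<Rightarrow> 'a) list \<Rightarrow> bool" where
  "rref_of n U M \<longleftrightarrow> generator_matrix n U M \<and> is_rref M"

end

theory Submission
  imports Defs
begin

text \<open>
  The vectors of \<open>U\<close> vanishing on the first \<open>k\<close> coordinates form a subspace \<open>U\<^sub>k\<close>, and an
  RREF of \<open>U\<^sub>k\<close> is obtained from one of \<open>U\<^sub>k\<^sub>+\<^sub>1\<close> by putting in front at most one row with
  pivot \<open>k\<close>; descending from \<open>U\<^sub>n = 0\<close> this gives an RREF \<open>M\<close> of \<open>U = U\<^sub>0\<close>.
  Now let \<open>v = \<Sum> c\<^sub>i M\<^sub>i\<close> be nonzero and let \<open>c\<^sub>k\<close> be its first nonzero coefficient. Since the pivot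
  columns of \<open>M\<close> are unit vectors and pivots increase, \<open>v\<close> vanishes before the pivot \<open>q\<close> of
  \<open>M\<^sub>k\<close> and \<open>v q = c\<^sub>k\<close>. If \<open>M\<^sub>k\<close> is not the last row, the last row vanishes up to \<open>q\<close>, so it
  precedes \<open>v\<close> because \<open>0 \<prec> c\<^sub>k\<close>. Otherwise \<open>v = c\<^sub>k \<cdot> last M\<close>, the last row is \<open>1\<close> at \<open>q\<close>, and
  \<open>1 \<prec> c\<^sub>k\<close> unless \<open>v\<close> is the last row itself. So the last row is the \<open>\<prec>\<close>-least nonzero vector.
\<close>

lemma subspace_subset_vecs: "subspace n U \<Longrightarrow> U \<subseteq> vecs n"
  unfolding subspace_def by blast

lemma subspace_zero: "subspace n U \<Longrightarrow> (\<lambda>_. 0) \<in> U"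
  unfolding subspace_def by blast

lemma subspace_scale: "subspace n U \<Longrightarrow> x \<in> U \<Longrightarrow> (\<lambda>i. c * x i) \<in> U"
  unfolding subspace_def by blast

lemma subspace_add: "subspace n U \<Longrightarrow> x \<in> U \<Longrightarrow> y \<in> U \<Longrightarrow> (\<lambda>i. x i + y i) \<in> U"
  unfolding subspace_def by blast

lemma subspace_add_scaled:
  assumes "subspace n U" "x \<in> U" "y \<in> U"
  shows "(\<lambda>i. x i + c * y i) \<in> U"
  using subspace_add[OF assms(1,2) subspace_scale[OF assms(1,3)]] .

lemma subspace_restrict:
  assumes "subspace n U"
  shows "subspace n {v\<in>U. \<forall>i\<in>I. v i = 0}"
  using assms unfolding subspace_def by auto

lemma lincomb_Nil [simp]: "lincomb c [] = (\<lambda>_. 0)"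
  by (simp add: lincomb_def)

lemma lincomb_Cons: "lincomb c (x # M) = (\<lambda>j. c 0 * x j + lincomb (\<lambda>i. c (Suc i)) M j)"
  unfolding lincomb_def by (simp only: length_Cons sum.lessThan_Suc_shift nth_Cons_0 nth_Cons_Suc)

lemma lincomb_cong: "(\<And>i. i < length M \<Longrightarrow> c i = d i) \<Longrightarrow> lincomb c M = lincomb d M"
  unfolding lincomb_def by simp

lemma lincomb_in_subspace:
  assumes "subspace n U" "set M \<subseteq> U"
  shows "lincomb c M \<in> U"
  using assms(2)
proof (induction M arbitrary: c)
  case Nil
  show ?case using subspace_zero[OF assms(1)] by simp
next
  case (Cons x M)
  have "(\<lambda>j. lincomb (\<lambda>i. c (Suc i)) M j + c 0 * x j) \<in> U"
    using Cons subspace_add_scaled[OF assms(1)] by simp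
  then show ?case unfolding lincomb_Cons by (simp add: add.commute)
qed

lemma lincomb_unit:
  assumes "i < length M"
  shows "lincomb (\<lambda>j. if j = i then 1 else 0) M = M ! i"
proof
  fix j
  have "lincomb (\<lambda>j. if j = i then 1 else 0) M j = (\<Sum>l<length M. if l = i then (M ! l) j else 0)"
    unfolding lincomb_def by (intro sum.cong) auto
  then show "lincomb (\<lambda>j. if j = i then 1 else 0) M j = (M ! i) j"
    using assms by simp
qed

lemma generator_matrix_rows:
  assumes "generator_matrix n U M"
  shows "set M \<subseteq> U"
proof
  fix r assume "r \<in> set M"
  then obtain i where "i < length M" "r = M ! i"
    by (auto simp: in_set_conv_nth)
  then have "r = lincomb (\<lambda>j. if j = i then 1 else 0) M"
    by (simp add: lincomb_unit)
  then show "r \<in> U"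
    using assms unfolding generator_matrix_def by blast
qed

lemma pivot_nonzero: "x \<noteq> (\<lambda>_. 0) \<Longrightarrow> x (pivot x) \<noteq> 0"
  unfolding pivot_def by (rule LeastI_ex) auto

lemma less_pivot_zero: "j < pivot x \<Longrightarrow> x j = 0"
  unfolding pivot_def using not_less_Least by blast

lemma pivot_eqI: "x k \<noteq> 0 \<Longrightarrow> (\<And>j. j < k \<Longrightarrow> x j = 0) \<Longrightarrow> pivot x = k"
  unfolding pivot_def by (rule Least_equality) (auto simp: not_le[symmetric])

lemma pivot_less:
  assumes "x \<in> vecs n" "x \<noteq> (\<lambda>_. 0)"
  shows "pivot x < n"
  using assms pivot_nonzero[of x] unfolding vecs_def by force

lemma rref_row_nonzero: "is_rref M \<Longrightarrow> r \<in> set M \<Longrightarrow> r \<noteq> (\<lambda>_. 0)"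
  unfolding is_rref_def by blast

lemma rref_pivot_less: "is_rref M \<Longrightarrow> i < j \<Longrightarrow> j < length M \<Longrightarrow> pivot (M ! i) < pivot (M ! j)"
  unfolding is_rref_def by blast

lemma rref_at_pivot:
  "is_rref M \<Longrightarrow> i < length M \<Longrightarrow> j < length M \<Longrightarrow> (M ! j) (pivot (M ! i)) = (if j = i then 1 else 0)"
  unfolding is_rref_def by auto

lemma lincomb_rref_at_pivot:
  assumes "is_rref M" "i < length M"
  shows "lincomb c M (pivot (M ! i)) = c i"
proof -
  have "\<And>j. j < length M \<Longrightarrow> c j * (M ! j) (pivot (M ! i)) = (if j = i then c j else 0)"
    using rref_at_pivot[OF assms] by simp
  then show ?thesis
    using assms(2) unfolding lincomb_def by simp
qed

lemma lincomb_rref_below_pivot: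
  assumes "is_rref M" "k < length M" "\<And>i. i < k \<Longrightarrow> c i = 0" "j < pivot (M ! k)"
  shows "lincomb c M j = 0"
  unfolding lincomb_def
proof (rule sum.neutral, intro ballI)
  fix i assume i: "i \<in> {..<length M}"
  show "c i * (M ! i) j = 0"
  proof (cases "i < k")
    case False
    then have "k = i \<or> k < i"
      by auto
    moreover have "k < i \<Longrightarrow> pivot (M ! k) < pivot (M ! i)"
      using rref_pivot_less[OF assms(1)] i by simp
    ultimately have "pivot (M ! k) \<le> pivot (M ! i)"
      by auto
    then show ?thesis
      using assms(4) less_pivot_zero[of j "M ! i"] by simp
  qed (simp add: assms(3))
qed

lemma rref_independent:
  assumes "is_rref M" "lincomb c M = (\<lambda>_. 0)" "i < length M"
  shows "c i = 0"
  using lincomb_rref_at_pivot[OF assms(1,3), of c] assms(2) by simp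

lemma is_rref_Cons:
  assumes M: "is_rref M" and x: "x \<noteq> (\<lambda>_. 0)" "x (pivot x) = 1"
    and "\<forall>r\<in>set M. pivot x < pivot r" "\<forall>r\<in>set M. r (pivot x) = 0" "\<forall>r\<in>set M. x (pivot r) = 0"
  shows "is_rref (x # M)"
proof -
  have rows: "pivot x < pivot (M ! j) \<and> (M ! j) (pivot x) = 0 \<and> x (pivot (M ! j)) = 0"
    if "j < length M" for j
    using assms(4-6) nth_mem[OF that] by blast
  show ?thesis
    unfolding is_rref_def
  proof (intro conjI allI impI)
    show "\<forall>r\<in>set (x # M). r \<noteq> (\<lambda>_. 0)"
      using rref_row_nonzero[OF M] x(1) by auto
  next
    fix i j assume ij: "i < j \<and> j < length (x # M)"
    then obtain j' where j: "j = Suc j'" "j' < length M"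
      by (cases j) auto
    show "pivot ((x # M) ! i) < pivot ((x # M) ! j)"
      using ij j rows rref_pivot_less[OF M] by (cases i) auto
  next
    fix i assume "i < length (x # M)"
    then show "((x # M) ! i) (pivot ((x # M) ! i)) = 1"
      using rref_at_pivot[OF M] x(2) by (cases i) auto
  next
    fix i j assume "i < length (x # M)" "j < length (x # M)" "i \<noteq> j"
    then show "((x # M) ! j) (pivot ((x # M) ! i)) = 0"
      using rows rref_at_pivot[OF M] by (cases i; cases j) auto
  qed
qed

lemma rref_of_Cons:
  assumes W: "subspace n W" and below: "\<forall>v\<in>W. \<forall>i<k. v i = 0"
    and M: "rref_of n {v\<in>W. v k = 0} M"
    and w: "w \<in> W" "w k = 1" "\<forall>r\<in>set M. w (pivot r) = 0"
  shows "rref_of n W (w # M)"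
proof -
  have gen: "{v\<in>W. v k = 0} = {lincomb c M | c. True}" and rref: "is_rref M"
    using M unfolding rref_of_def generator_matrix_def by auto
  have rows: "set M \<subseteq> {v\<in>W. v k = 0}"
    using M unfolding rref_of_def by (rule generator_matrix_rows[OF conjunct1])
  have pivot_w: "pivot w = k"
    using w below by (intro pivot_eqI) auto
  have "k < pivot r" if r: "r \<in> set M" for r
  proof (rule ccontr)
    assume "\<not> k < pivot r"
    moreover have "r \<in> W" "r k = 0"
      using rows r by auto
    ultimately have "r (pivot r) = 0"
      using below by (cases "pivot r = k") auto
    moreover have "r \<noteq> (\<lambda>_. 0)"
      using rref_row_nonzero[OF rref r] .
    ultimately show False
      using pivot_nonzero by blast
  qed
  then have rref_w: "is_rref (w # M)"
    using rref w rows by (intro is_rref_Cons) (auto simp: pivot_w)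
  have "W \<subseteq> {lincomb d (w # M) | d. True}"
  proof
    fix v assume v: "v \<in> W"
    have "(\<lambda>i. v i + (- v k) * w i) \<in> W"
      using subspace_add_scaled[OF W v w(1)] .
    then have "(\<lambda>i. v i + (- v k) * w i) \<in> {v\<in>W. v k = 0}"
      using w(2) by simp
    then obtain d where d: "(\<lambda>i. v i + (- v k) * w i) = lincomb d M"
      using gen by auto
    have "v = lincomb (\<lambda>i. if i = 0 then v k else d (i - 1)) (w # M)"
      by (simp add: lincomb_Cons d[symmetric])
    then show "v \<in> {lincomb d (w # M) | d. True}" by blast
  qed
  moreover have "set (w # M) \<subseteq> W"
    using rows w by auto
  ultimately show ?thesis
    unfolding rref_of_def generator_matrix_def
    using subspace_subset_vecs[OF W] lincomb_in_subspace[OF W] rref_w rref_independent[OF rref_w]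
    by blast
qed

lemma exists_row_with_pivot:
  assumes W: "subspace n W" and M: "rref_of n {v\<in>W. v k = 0} M"
    and w: "w \<in> W" "w k \<noteq> 0"
  obtains w' where "w' \<in> W" "w' k = 1" "\<forall>r\<in>set M. w' (pivot r) = 0"
proof -
  define w1 where "w1 = (\<lambda>i. inverse (w k) * w i)"
  have w1: "w1 \<in> W" "w1 k = 1"
    using subspace_scale[OF W w(1)] w(2) unfolding w1_def by auto
  have rows: "set M \<subseteq> {v\<in>W. v k = 0}" and rref: "is_rref M"
    using M generator_matrix_rows unfolding rref_of_def by auto
  \<comment> \<open>Clear the pivot columns of \<open>M\<close>; this does not change coordinate \<open>k\<close>.\<close>
  define y where "y = lincomb (\<lambda>j. w1 (pivot (M ! j))) M"
  have "set M \<subseteq> {v\<in>W. \<forall>i\<in>{k}. v i = 0}"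
    using rows by simp
  then have "y \<in> {v\<in>W. \<forall>i\<in>{k}. v i = 0}"
    unfolding y_def by (rule lincomb_in_subspace[OF subspace_restrict[OF W]])
  then have y: "y \<in> W" "y k = 0"
    by simp_all
  have y_pivot: "y (pivot (M ! j)) = w1 (pivot (M ! j))" if "j < length M" for j
    unfolding y_def by (rule lincomb_rref_at_pivot[OF rref that])
  show ?thesis
  proof (rule that)
    show "(\<lambda>i. w1 i + (-1) * y i) \<in> W"
      by (rule subspace_add_scaled[OF W w1(1) y(1)])
    show "w1 k + (-1) * y k = 1"
      using w1 y by simp
    show "\<forall>r\<in>set M. w1 (pivot r) + (-1) * y (pivot r) = 0"
      using y_pivot by (simp add: all_set_conv_all_nth)
  qed
qed

lemma rref_of_zero: "rref_of n {\<lambda>_. 0} []"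
  unfolding rref_of_def generator_matrix_def is_rref_def by simp

lemma rref_of_Nil: "rref_of n U [] \<Longrightarrow> U = {\<lambda>_. 0}"
  unfolding rref_of_def generator_matrix_def by simp

lemma rref_of_last_row:
  assumes "rref_of n U M" "M \<noteq> []"
  shows "last M \<in> U" "last M \<noteq> (\<lambda>_. 0)"
proof -
  have "last M \<in> set M"
    using assms(2) by simp
  then show "last M \<in> U" "last M \<noteq> (\<lambda>_. 0)"
    using generator_matrix_rows rref_row_nonzero assms(1) unfolding rref_of_def by blast+
qed

lemma rref_of_exists_vanishing_below:
  assumes U: "subspace n U" and "k \<le> n"
  shows "\<exists>M. rref_of n {v\<in>U. \<forall>i<k. v i = 0} M"
  using \<open>k \<le> n\<close>
proof (induction k rule: inc_induct)
  case base
  have "{v\<in>U. \<forall>i<n. v i = 0} = {\<lambda>_. 0}"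
  proof (intro equalityI subsetI)
    fix v assume v: "v \<in> {v\<in>U. \<forall>i<n. v i = 0}"
    have "v i = 0" for i
      using v subspace_subset_vecs[OF U] unfolding vecs_def by (cases "i < n") auto
    then show "v \<in> {\<lambda>_. 0}"
      by (simp add: fun_eq_iff)
  qed (use subspace_zero[OF U] in simp)
  then have "rref_of n {v\<in>U. \<forall>i<n. v i = 0} []"
    using rref_of_zero by simp
  then show ?case ..
next
  case (step k)
  define W where "W = {v\<in>U. \<forall>i<k. v i = 0}"
  have W: "subspace n W"
    using subspace_restrict[OF U, of "{..<k}"] unfolding W_def by (simp add: Ball_def)
  have hyperplane: "{v\<in>W. v k = 0} = {v\<in>U. \<forall>i<Suc k. v i = 0}"
    unfolding W_def by (auto simp: less_Suc_eq)
  obtain M where M: "rref_of n {v\<in>W. v k = 0} M"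
    using step.IH unfolding hyperplane by blast
  show ?case
  proof (cases "\<exists>w\<in>W. w k \<noteq> 0")
    case True
    then obtain w where "w \<in> W" "w k \<noteq> 0"
      by blast
    then obtain w' where "w' \<in> W" "w' k = 1" "\<forall>r\<in>set M. w' (pivot r) = 0"
      using exists_row_with_pivot[OF W M] by blast
    moreover have "\<forall>v\<in>W. \<forall>i<k. v i = 0"
      unfolding W_def by simp
    ultimately have "rref_of n W (w' # M)"
      using rref_of_Cons[OF W _ M] by blast
    then show ?thesis
      unfolding W_def by blast
  next
    case False
    then have "{v\<in>W. v k = 0} = W"
      by auto
    with M have "rref_of n W M"
      by simp
    then show ?thesis
      unfolding W_def by blast
  qed
qed

lemma rref_of_exists: "subspace n U \<Longrightarrow> \<exists>M. rref_of n U M"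
  using rref_of_exists_vanishing_below[of n U 0] by simp

lemma field_order_irrefl: "field_order lt \<Longrightarrow> \<not> lt a a"
  unfolding field_order_def by blast

lemma field_order_trans: "field_order lt \<Longrightarrow> lt a b \<Longrightarrow> lt b c \<Longrightarrow> lt a c"
  unfolding field_order_def by blast

lemma field_order_one_less: "field_order lt \<Longrightarrow> a \<noteq> 0 \<Longrightarrow> a \<noteq> 1 \<Longrightarrow> lt 1 a"
  unfolding field_order_def by blast

lemma field_order_zero_less:
  assumes lt: "field_order lt" and "a \<noteq> 0"
  shows "lt 0 a"
proof (cases "a = 1")
  case False
  have "lt 0 1"
    using lt unfolding field_order_def by blast
  then show ?thesis
    using field_order_trans[OF lt _ field_order_one_less[OF lt \<open>a \<noteq> 0\<close> False]] by blast
next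
  case True
  then show ?thesis
    using lt unfolding field_order_def by blast
qed

lemma lex_less_asym:
  assumes lt: "field_order lt" and xy: "lex_less n lt x y"
  shows "\<not> lex_less n lt y x"
proof
  assume "lex_less n lt y x"
  then obtain i' where i': "\<forall>j<i'. y j = x j" "lt (y i') (x i')"
    unfolding lex_less_def by blast
  obtain i where i: "\<forall>j<i. x j = y j" "lt (x i) (y i)"
    using xy unfolding lex_less_def by blast
  consider "i < i'" | "i' < i" | "i = i'"
    by linarith
  then show False
  proof cases
    case 1
    then have "y i = x i"
      using i'(1) by blast
    then show False
      using i(2) field_order_irrefl[OF lt] by simp
  next
    case 2
    then have "x i' = y i'"
      using i(1) by blast
    then show False
      using i'(2) field_order_irrefl[OF lt] by simp
  next
    case 3
    then have "lt (x i) (x i)"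
      using field_order_trans[OF lt i(2)] i'(2) by simp
    then show False
      using field_order_irrefl[OF lt] by simp
  qed
qed

lemma rref_last_lex_least:
  assumes lt: "field_order lt" and M: "rref_of n U M" "M \<noteq> []"
    and v: "v \<in> U" "v \<noteq> (\<lambda>_. 0)" "v \<noteq> last M"
  shows "lex_less n lt (last M) v"
proof -
  have rref: "is_rref M" and rows: "set M \<subseteq> vecs n"
    using M(1) unfolding rref_of_def generator_matrix_def by auto
  obtain c where vc: "v = lincomb c M"
    using M(1) v(1) unfolding rref_of_def generator_matrix_def by blast
  define m where "m = length M - 1"
  have m: "m < length M" "last M = M ! m"
    using M(2) by (simp_all add: m_def last_conv_nth)
  have "\<exists>k. k < length M \<and> c k \<noteq> 0"
  proof (rule ccontr)
    assume "\<nexists>k. k < length M \<and> c k \<noteq> 0"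
    then have "lincomb c M = lincomb (\<lambda>_. 0) M"
      by (intro lincomb_cong) auto
    then show False
      using v(2) vc by (simp add: lincomb_def)
  qed
  then obtain k where k: "k < length M" "c k \<noteq> 0" and c_below: "\<And>i. i < k \<Longrightarrow> c i = 0"
    unfolding exists_least_iff[of "\<lambda>k. k < length M \<and> c k \<noteq> 0"] by auto
  define q where "q = pivot (M ! k)"
  have "k \<le> m"
    using k(1) by (simp add: m_def)
  have pivot_mono: "q < pivot (last M)" if "k < m"
    using rref_pivot_less[OF rref that m(1)] m(2) unfolding q_def by simp
  have "q \<le> pivot (last M)"
    using \<open>k \<le> m\<close> pivot_mono m(2) unfolding q_def by (cases "k = m") auto
  then have agree: "last M j = v j" if "j < q" for j
    using that less_pivot_zero[of j "last M"] lincomb_rref_below_pivot[OF rref k(1) c_below]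
    unfolding vc q_def by simp
  have vq: "v q = c k"
    unfolding vc q_def by (rule lincomb_rref_at_pivot[OF rref k(1)])
  have "M ! k \<in> set M"
    using k(1) by simp
  then have "q < n"
    using rows rref_row_nonzero[OF rref] unfolding q_def by (intro pivot_less) auto
  have "lt (last M q) (c k)"
  proof (cases "k = m")
    case True
    have "c k \<noteq> 1"
    proof
      assume "c k = 1"
      then have "lincomb c M = lincomb (\<lambda>j. if j = m then 1 else 0) M"
        using True c_below by (intro lincomb_cong) (auto simp: m_def)
      then have "v = M ! m"
        using vc lincomb_unit[OF m(1)] by simp
      then show False
        using v(3) m(2) by simp
    qed
    moreover have "last M q = 1"
      using rref_at_pivot[OF rref m(1) m(1)] m(2) True unfolding q_def by simp
    ultimately show ?thesis
      using field_order_one_less[OF lt k(2)] by simp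
  next
    case False
    with \<open>k \<le> m\<close> have "last M q = 0"
      using pivot_mono less_pivot_zero by simp
    then show ?thesis
      using field_order_zero_less[OF lt k(2)] by simp
  qed
  then show ?thesis
    unfolding lex_less_def using \<open>q < n\<close> agree vq
    by (intro exI[of _ q] conjI allI impI) simp_all
qed

theorem lemma5p3:
  fixes lt :: "'a::{field,finite} \<Rightarrow> 'a \<Rightarrow> bool"
    and n :: nat and U :: "(nat \<Rightarrow> 'a) set" and u :: "nat \<Rightarrow> 'a"
  assumes "field_order lt"
    and "subspace n U"
    and "U \<noteq> {\<lambda>_. 0}"
    and "u \<in> U" and "u \<noteq> (\<lambda>_. 0)"
    and "\<forall>v\<in>U. v \<noteq> (\<lambda>_. 0) \<and> v \<noteq> u \<longrightarrow> lex_less n lt u v"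
  shows "(\<exists>M. rref_of n U M) \<and> (\<forall>M. rref_of n U M \<longrightarrow> M \<noteq> [] \<and> last M = u)"
proof (intro conjI allI impI)
  show "\<exists>M. rref_of n U M"
    using assms(2) by (rule rref_of_exists)
next
  fix M assume M: "rref_of n U M"
  show "M \<noteq> []"
    using M rref_of_Nil assms(3) by blast
  then have last: "last M \<in> U" "last M \<noteq> (\<lambda>_. 0)"
    using rref_of_last_row[OF M] by auto
  show "last M = u"
  proof (rule ccontr)
    assume "last M \<noteq> u"
    then have "lex_less n lt u (last M)"
      using assms(6) last by blast
    moreover have "lex_less n lt (last M) u"
      using rref_last_lex_least[OF assms(1) M \<open>M \<noteq> []\<close> assms(4,5)] \<open>last M \<noteq> u\<close> by simp
    ultimately show False
      using lex_less_asym[OF assms(1)] by blast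
  qed
qed

end
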